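(* Let $K$ be a nonempty compact subset of $\mathbb R^d$. For every $t>\underline{\dim}_B(K)$ and every $\alpha>0$ there exist $\mu\in\mathcal P(K)$ and $r\in(0,\alpha)$ such that $\mu(B(x,r))\ge2^{-t}r^t$ for all $x\in K$.
   Context: $\mathcal P(K)$ is the set of Borel probability measures on $K$, $B(x,r)$ the open ball, and $\underline{\dim}_B$ the lower box dimension. *)

theory Defs
  imports "HOL-Probability.Probability"
begin

definition covering_number :: "'a::metric_space set \<Rightarrow> real \<Rightarrow> nat" where
  "covering_number K r = (LEAST n. \<exists>C. finite C \<and> card C = n \<and> K \<subseteq> (\<Union>c\<in>C. cball c r))"

definition lower_box_dim :: "'a::metric_space set \<Rightarrow> ereal" where
  "lower_box_dim K = Liminf (at_right 0)
     (\<lambda>r. ereal (ln (real (covering_number K r)) / (- ln r)))"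

end

theory Submission
  imports Defs
begin

text \<open>
  Take a scale \<open>\<rho> < \<alpha>/2\<close> at which \<open>N(K,\<rho>) < \<rho> powr (-t)\<close>, which exists because \<open>t\<close> exceeds the
  lower box dimension. Moving each ball of an optimal \<open>\<rho>\<close>-cover to a point of \<open>K\<close> gives a
  \<open>2\<rho>\<close>-net \<open>Y \<subseteq> K\<close> with at most \<open>N(K,\<rho>)\<close> points, and the uniform distribution on \<open>Y\<close>
  gives every ball \<open>B(x,r)\<close>, \<open>x \<in> K\<close>, \<open>r > 2\<rho>\<close>, mass at least \<open>1/N(K,\<rho>)\<close>. Since
  \<open>N(K,\<rho>) powr (-1/t) > \<rho>\<close>, a radius \<open>r\<close> slightly above \<open>2\<rho>\<close> satisfies \<open>(r/2) powr t \<le> 1/N(K,\<rho>)\<close>.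
\<close>

lemma compact_imp_finite_cball_cover:
  fixes K :: "'a::metric_space set"
  assumes "compact K" "0 < r"
  shows "\<exists>C. finite C \<and> K \<subseteq> (\<Union>c\<in>C. cball c r)"
proof -
  obtain C where "finite C" "K \<subseteq> (\<Union>c\<in>C. ball c r)"
    using seq_compact_imp_totally_bounded[OF compact_imp_seq_compact[OF assms(1)]] assms(2)
    by blast
  then show ?thesis
    by (intro exI[of _ C]) force
qed

lemma covering_number_cover:
  fixes K :: "'a::metric_space set"
  assumes "compact K" "0 < r"
  obtains C where "finite C" "card C = covering_number K r" "K \<subseteq> (\<Union>c\<in>C. cball c r)"
proof -
  have "\<exists>n C. finite C \<and> card C = n \<and> K \<subseteq> (\<Union>c\<in>C. cball c r)"
    using compact_imp_finite_cball_cover[OF assms] by blast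
  from LeastI_ex[OF this] show ?thesis
    using that unfolding covering_number_def by blast
qed

lemma covering_number_pos:
  fixes K :: "'a::metric_space set"
  assumes "compact K" "0 < r" "K \<noteq> {}"
  shows "1 \<le> covering_number K r"
proof -
  obtain C where "finite C" "card C = covering_number K r" "K \<subseteq> (\<Union>c\<in>C. cball c r)"
    using covering_number_cover[OF assms(1,2)] .
  with assms(3) show ?thesis
    by (metis One_nat_def Suc_leI UN_empty card_gt_0_iff subset_empty)
qed

lemma covering_number_net:
  fixes K :: "'a::metric_space set"
  assumes "compact K" "0 < r"
  obtains Y where "finite Y" "Y \<subseteq> K" "card Y \<le> covering_number K r"
    "\<And>x. x \<in> K \<Longrightarrow> \<exists>y\<in>Y. dist x y \<le> 2 * r"
proof -
  obtain C where C: "finite C" "card C = covering_number K r" "K \<subseteq> (\<Union>c\<in>C. cball c r)"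
    using covering_number_cover[OF assms] .
  define C' where "C' = {c\<in>C. K \<inter> cball c r \<noteq> {}}"
  define p where "p c = (SOME z. z \<in> K \<inter> cball c r)" for c
  have p: "p c \<in> K \<inter> cball c r" if "c \<in> C'" for c
    using that unfolding C'_def p_def by (metis (mono_tags, lifting) ex_in_conv mem_Collect_eq someI)
  have "finite C'" "C' \<subseteq> C"
    using C(1) by (auto simp: C'_def)
  then have "card (p ` C') \<le> covering_number K r"
    using C(1,2) card_image_le card_mono order_trans by metis
  moreover have "\<exists>y\<in>p ` C'. dist x y \<le> 2 * r" if "x \<in> K" for x
  proof -
    obtain c where c: "c \<in> C" "dist c x \<le> r"
      using C(3) \<open>x \<in> K\<close> by auto
    then have "c \<in> C'"
      using \<open>x \<in> K\<close> by (auto simp: C'_def)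
    have "dist x (p c) \<le> dist x c + dist c (p c)"
      by (rule dist_triangle)
    also have "\<dots> \<le> 2 * r"
      using c p[OF \<open>c \<in> C'\<close>] by (simp add: dist_commute)
    finally show ?thesis
      using \<open>c \<in> C'\<close> by blast
  qed
  ultimately show ?thesis
    using that[of "p ` C'"] \<open>finite C'\<close> p by blast
qed

lemma covering_number_less_powr_at_small_scale:
  fixes K :: "'a::metric_space set"
  assumes "compact K" "K \<noteq> {}" "lower_box_dim K < ereal t" "0 < \<epsilon>" "\<epsilon> \<le> 1"
  shows "\<exists>\<rho>. 0 < \<rho> \<and> \<rho> < \<epsilon> \<and> real (covering_number K \<rho>) < \<rho> powr (-t)"
proof -
  define f where "f r = ereal (ln (real (covering_number K r)) / (- ln r))" for r
  obtain \<rho> where \<rho>: "0 < \<rho>" "\<rho> < \<epsilon>" "f \<rho> < ereal t"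
  proof (rule ccontr)
    assume "\<not> thesis"
    then have "eventually (\<lambda>r. ereal t \<le> f r) (at_right 0)"
      using that assms(4) unfolding eventually_at_right_field by (metis not_le)
    then have "ereal t \<le> lower_box_dim K"
      unfolding lower_box_dim_def f_def[symmetric] by (rule Liminf_bounded)
    with assms(3) show False
      by simp
  qed
  have "1 \<le> real (covering_number K \<rho>)"
    using covering_number_pos[OF assms(1) \<rho>(1) assms(2)] by simp
  have "0 < - ln \<rho>"
    using \<rho> assms(5) by simp
  have "ln (real (covering_number K \<rho>)) / (- ln \<rho>) < t"
    using \<rho>(3) by (simp add: f_def)
  then have "ln (real (covering_number K \<rho>)) < t * (- ln \<rho>)"
    using pos_divide_less_eq[OF \<open>0 < - ln \<rho>\<close>] by simp
  also have "\<dots> = ln (\<rho> powr (-t))"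
    using \<rho>(1) by (simp add: ln_powr)
  finally have "ln (real (covering_number K \<rho>)) < ln (\<rho> powr (-t))" .
  moreover have "0 < real (covering_number K \<rho>)" "0 < \<rho> powr (-t)"
    using \<open>1 \<le> real (covering_number K \<rho>)\<close> \<rho>(1) by auto
  ultimately have "real (covering_number K \<rho>) < \<rho> powr (-t)"
    by (simp only: ln_less_cancel_iff)
  with \<rho>(1,2) show ?thesis
    by blast
qed

lemma exists_radius_powr_le_inverse:
  fixes n \<rho> t \<alpha> :: real
  assumes "0 < \<rho>" "\<rho> < 1" "2 * \<rho> < \<alpha>" "1 \<le> n" "n < \<rho> powr (-t)"
  shows "\<exists>r. 2 * \<rho> < r \<and> r < \<alpha> \<and> 2 powr (-t) * r powr t \<le> 1 / n"
proof -
  have "1 < \<rho> powr (-t)"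
    using assms(4,5) by linarith
  then have "0 < t"
    using powr_le1[of "-t" \<rho>] assms(1,2) by fastforce
  define s where "s = min (n powr (-1/t)) (\<alpha>/2)"
  have "(\<rho> powr (-t)) powr (-1/t) < n powr (-1/t)"
    by (rule powr_less_mono2_neg) (use assms \<open>0 < t\<close> in auto)
  then have "\<rho> < s"
    using assms(1,3) \<open>0 < t\<close> by (simp add: s_def powr_powr)
  define r where "r = \<rho> + s"
  have "2 powr (-t) * r powr t = (r/2) powr t"
    using assms(1) \<open>\<rho> < s\<close> by (simp add: r_def powr_divide powr_minus_divide)
  also have "\<dots> \<le> (n powr (-1/t)) powr t"
    using assms(1) \<open>\<rho> < s\<close> \<open>0 < t\<close> by (intro powr_mono2) (auto simp: r_def s_def)
  also have "\<dots> = n powr (-1/t * t)"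
    by (rule powr_powr)
  also have "\<dots> = 1 / n"
    using \<open>0 < t\<close> assms(4) by (simp add: powr_minus_divide)
  finally show ?thesis
    using \<open>\<rho> < s\<close> assms(3) by (intro exI[of _ r]) (auto simp: r_def s_def)
qed

lemma exists_uniform_borel_prob:
  fixes Y :: "'a::topological_space set"
  assumes "finite Y" "Y \<noteq> {}"
  shows "\<exists>\<mu>. prob_space \<mu> \<and> sets \<mu> = sets borel \<and>
           (\<forall>A\<in>sets borel. measure \<mu> A = card (Y \<inter> A) / card Y)"
proof -
  define \<mu> where "\<mu> = distr (measure_pmf (pmf_of_set Y)) borel id"
  have "prob_space \<mu>"
    unfolding \<mu>_def by (simp add: measure_pmf.prob_space_distr)
  moreover have "measure \<mu> A = card (Y \<inter> A) / card Y" if "A \<in> sets borel" for A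
    using that assms by (simp add: \<mu>_def measure_distr measure_pmf_of_set)
  ultimately show ?thesis
    by (intro exI[of _ \<mu>]) (simp add: \<mu>_def)
qed

theorem lemma2p12:
  fixes K :: "'a::euclidean_space set" and t \<alpha> :: real
  assumes "compact K" and "K \<noteq> {}"
    and "ereal t > lower_box_dim K" and "\<alpha> > 0"
  shows "\<exists>\<mu> :: 'a measure. \<exists>r.
           prob_space \<mu> \<and> sets \<mu> = sets borel \<and> emeasure \<mu> K = 1 \<and>
           0 < r \<and> r < \<alpha> \<and>
           (\<forall>x\<in>K. measure \<mu> (ball x r) \<ge> 2 powr (-t) * r powr t)"
proof -
  obtain \<rho> where \<rho>: "0 < \<rho>" "\<rho> < min (\<alpha>/2) 1" "real (covering_number K \<rho>) < \<rho> powr (-t)"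
    using covering_number_less_powr_at_small_scale[OF assms(1,2,3), of "min (\<alpha>/2) 1"] assms(4)
    by auto
  define N where "N = real (covering_number K \<rho>)"
  have "1 \<le> N"
    using covering_number_pos[OF assms(1) \<rho>(1) assms(2)] by (simp add: N_def)
  obtain Y where Y: "finite Y" "Y \<subseteq> K" "card Y \<le> covering_number K \<rho>"
    and net: "\<And>x. x \<in> K \<Longrightarrow> \<exists>y\<in>Y. dist x y \<le> 2 * \<rho>"
    using covering_number_net[OF assms(1) \<rho>(1)] by blast
  then have "Y \<noteq> {}"
    using assms(2) by blast
  obtain r where r: "2 * \<rho> < r" "r < \<alpha>" "2 powr (-t) * r powr t \<le> 1 / N"
    using exists_radius_powr_le_inverse[of \<rho> \<alpha> N t] \<rho> \<open>1 \<le> N\<close> unfolding N_def by auto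
  obtain \<mu> where \<mu>: "prob_space \<mu>" "sets \<mu> = sets borel"
    and uniform: "\<And>A. A \<in> sets borel \<Longrightarrow> measure \<mu> A = card (Y \<inter> A) / card Y"
    using exists_uniform_borel_prob[OF \<open>finite Y\<close> \<open>Y \<noteq> {}\<close>] by blast
  have "measure \<mu> K = 1"
    using uniform[of K] compact_imp_closed[OF assms(1)] Y(1,2) \<open>Y \<noteq> {}\<close>
    by (simp add: Int_absorb2)
  then have "emeasure \<mu> K = 1"
    by (simp add: finite_measure.emeasure_eq_measure[OF prob_space.finite_measure[OF \<mu>(1)]])
  moreover have "2 powr (-t) * r powr t \<le> measure \<mu> (ball x r)" if x: "x \<in> K" for x
  proof -
    obtain y where "y \<in> Y" "dist x y \<le> 2 * \<rho>"
      using net[OF x] by blast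
    then have "y \<in> Y \<inter> ball x r"
      using r(1) by simp
    then have "1 \<le> card (Y \<inter> ball x r)"
      using \<open>finite Y\<close> by (metis Suc_leI card_gt_0_iff empty_iff finite_Int One_nat_def)
    then have "1 / N \<le> card (Y \<inter> ball x r) / card Y"
      using Y(1,3) \<open>Y \<noteq> {}\<close> by (simp add: N_def frac_le card_gt_0_iff)
    then show ?thesis
      using r(3) uniform[of "ball x r"] by simp
  qed
  ultimately show ?thesis
    using \<mu> \<rho>(1) r(1,2) by (intro exI[of _ \<mu>] exI[of _ r]) auto
qed

end
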